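(* Let $m,n\ge1$, $A\in\mathbb{R}^{m\times n}$, $\mathbf{u},\mathbf{l}\in\mathbb{R}^n$, $C$ a finite set of ReLU constraints and $\mathcal{T}$ a proof tree. If $\mathrm{check\_tree}(A,\mathbf{u},\mathbf{l},C,\mathcal{T})$ returns true, then the DNN verification query $\langle A,\mathbf{u},\mathbf{l},C\rangle$ has no solution, i.e. there is no $\mathbf{s}\in\mathbb{R}^n$ with $A\mathbf{s}=\mathbf{0}$, $\mathbf{l}\le\mathbf{s}\le\mathbf{u}$ and $\mathbf{s}$ satisfying every constraint in $C$.
   Context: For vectors, $\mathbf{l}\le\mathbf{x}\le\mathbf{u}$ means $l_j\le x_j\le u_j$ for all $j=1,\dots,n$. A ReLU constraint is a triple $(b,f,a)$ of indices in $\{1,\dots,n\}$; $\mathbf{s}\in\mathbb{R}^n$ satisfies it if $s_f=\max(s_b,0)$ and $s_f-s_b-s_a=0$. A proof tree is either $\mathrm{Leaf}(w)$ with $w$ a finite list of reals, or $\mathrm{Node}(\sigma,\mathcal{T}^L,\mathcal{T}^R)$ with $\mathcal{T}^L,\mathcal{T}^R$ proof trees and $\sigma$ a split, which is either $\mathrm{SingleVar}(i,k)$ ($i$ an index, $k\in\mathbb{R}$) or $\mathrm{Relu}(b,f,a)$ ($b,f,a$ indices). A split is valid w.r.t. $C$ if it is $\mathrm{SingleVar}(i,k)$ with $1\le i\le n$, or $\mathrm{Relu}(b,f,a)$ with $(b,f,a)\in C$ and $b,f,a$ pairwise distinct. For $\mathbf{v}\in\mathbb{R}^n$, $\mathbf{v}[i\mapsto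 k]$ replaces the $i$-th entry by $k$. $\mathrm{update\_bounds}(\mathbf{l},\mathbf{u},\sigma)$ returns $((\mathbf{l}^L,\mathbf{u}^L),(\mathbf{l}^R,\mathbf{u}^R))$: for $\sigma=\mathrm{SingleVar}(i,k)$, $\mathbf{l}^L=\mathbf{l}$, $\mathbf{u}^L=\mathbf{u}[i\mapsto k]$, $\mathbf{l}^R=\mathbf{l}[i\mapsto k]$, $\mathbf{u}^R=\mathbf{u}$; for $\sigma=\mathrm{Relu}(b,f,a)$, $\mathbf{l}^L=\mathbf{l}[f\mapsto0]$, $\mathbf{u}^L=\mathbf{u}[b\mapsto0][f\mapsto0]$, $\mathbf{l}^R=\mathbf{l}[b\mapsto0][a\mapsto0]$, $\mathbf{u}^R=\mathbf{u}[a\mapsto0]$. The leaf check $\mathrm{leafcheck}(A,\mathbf{u},\mathbf{l},w)$ is true iff $w\in\mathbb{R}^m$ and, writing $\gamma=w^\intercal A\in\mathbb{R}^n$, $\sum_{j:\gamma_j>0}\gamma_ju_j+\sum_{j:\gamma_j<0}\gamma_jl_j<0$. Then $\mathrm{check\_tree}(A,\mathbf{u},\mathbf{l},C,\mathrm{Leaf}(w))=\mathrm{leafcheck}(A,\mathbf{u},\mathbf{l},w)$, and $\mathrm{check\_tree}(A,\mathbf{u},\mathbf{l},C,\mathrm{Node}(\sigma,\mathcal{T}^L,\mathcal{T}^R))$ is true iff $\sigma$ is valid w.r.t. $C$ and both $\mathrm{check\_tree}(A,\mathbf{u}^L,\mathbf{l}^L,C,\mathcal{T}^L)$ and $\mathrm{check\_tree}(A,\mathbf{u}^R,\mathbf{l}^R,C,\mathcal{T}^R)$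 are true, with $((\mathbf{l}^L,\mathbf{u}^L),(\mathbf{l}^R,\mathbf{u}^R))=\mathrm{update\_bounds}(\mathbf{l},\mathbf{u},\sigma)$. *)

theory Defs
  imports Complex_Main
begin

(* Conventions: indices are 0-based, ranging over {0..<n} (resp. {0..<m});
   vectors in R^n are functions nat => real (only entries < n matter);
   the matrix A in R^{m x n} is a function nat => nat => real, A i j = entry (i,j). *)

type_synonym relu = "nat \<times> nat \<times> nat"

datatype split = SingleVar nat real | Relu nat nat nat

datatype proof_tree = Leaf "real list" | Node split proof_tree proof_tree

definition relu_sat :: "(nat \<Rightarrow> real) \<Rightarrow> relu \<Rightarrow> bool" where
  "relu_sat s c = (case c of (b, f, a) \<Rightarrow> s f = max (s b) 0 \<and> s f - s b - s a = 0)"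

definition valid_split :: "nat \<Rightarrow> relu set \<Rightarrow> split \<Rightarrow> bool" where
  "valid_split n C \<sigma> = (case \<sigma> of
      SingleVar i k \<Rightarrow> i < n
    | Relu b f a \<Rightarrow> (b, f, a) \<in> C \<and> b \<noteq> f \<and> b \<noteq> a \<and> f \<noteq> a)"

fun update_bounds :: "(nat \<Rightarrow> real) \<Rightarrow> (nat \<Rightarrow> real) \<Rightarrow> split \<Rightarrow>
    ((nat \<Rightarrow> real) \<times> (nat \<Rightarrow> real)) \<times> ((nat \<Rightarrow> real) \<times> (nat \<Rightarrow> real))" where
  "update_bounds l u (SingleVar i k) = ((l, u(i := k)), (l(i := k), u))"
| "update_bounds l u (Relu b f a) =
     ((l(f := 0), (u(b := 0))(f := 0)), ((l(b := 0))(a := 0), u(a := 0)))"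

definition gamma :: "nat \<Rightarrow> (nat \<Rightarrow> nat \<Rightarrow> real) \<Rightarrow> real list \<Rightarrow> nat \<Rightarrow> real" where
  "gamma m A w j = (\<Sum>i<m. w ! i * A i j)"

definition leafcheck :: "nat \<Rightarrow> nat \<Rightarrow> (nat \<Rightarrow> nat \<Rightarrow> real) \<Rightarrow> (nat \<Rightarrow> real) \<Rightarrow> (nat \<Rightarrow> real)
    \<Rightarrow> real list \<Rightarrow> bool" where
  "leafcheck m n A u l w = (length w = m \<and>
     (\<Sum>j\<in>{j. j < n \<and> gamma m A w j > 0}. gamma m A w j * u j)
   + (\<Sum>j\<in>{j. j < n \<and> gamma m A w j < 0}. gamma m A w j * l j) < 0)"

fun check_tree :: "nat \<Rightarrow> nat \<Rightarrow> (nat \<Rightarrow> nat \<Rightarrow> real) \<Rightarrow> (nat \<Rightarrow> real) \<Rightarrow> (nat \<Rightarrow> real)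
    \<Rightarrow> relu set \<Rightarrow> proof_tree \<Rightarrow> bool" where
  "check_tree m n A u l C (Leaf w) = leafcheck m n A u l w"
| "check_tree m n A u l C (Node \<sigma> TL TR) =
     (valid_split n C \<sigma> \<and>
      (case update_bounds l u \<sigma> of ((lL, uL), (lR, uR)) \<Rightarrow>
         check_tree m n A uL lL C TL \<and> check_tree m n A uR lR C TR))"

definition is_solution :: "nat \<Rightarrow> nat \<Rightarrow> (nat \<Rightarrow> nat \<Rightarrow> real) \<Rightarrow> (nat \<Rightarrow> real) \<Rightarrow> (nat \<Rightarrow> real)
    \<Rightarrow> relu set \<Rightarrow> (nat \<Rightarrow> real) \<Rightarrow> bool" where
  "is_solution m n A u l C s =
     ((\<forall>i<m. (\<Sum>j<n. A i j * s j) = 0) \<and>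
      (\<forall>j<n. l j \<le> s j \<and> s j \<le> u j) \<and>
      (\<forall>c\<in>C. relu_sat s c))"

end

theory Submission
  imports Defs
begin

text \<open>A leaf certificate w is a Farkas-type witness: every kernel vector s of A satisfies
  \<open>\<gamma>\<^sup>T s = w\<^sup>T A s = 0\<close>, whereas on the box \<open>[l, u]\<close> the linear form \<open>\<gamma>\<^sup>T s\<close> is bounded above by
  the negative number checked at the leaf. An inner node splits the box into two pieces which,
  for points satisfying the ReLU constraints, cover all candidate solutions; so induction on the
  proof tree shows that no solution lies in the original box.\<close>

definition in_box :: "nat \<Rightarrow> (nat \<Rightarrow> real) \<Rightarrow> (nat \<Rightarrow> real) \<Rightarrow> (nat \<Rightarrow> real) \<Rightarrow> bool" where
  "in_box n l u s \<longleftrightarrow> (\<forall>j<n. l j \<le> s j \<and> s j \<le> u j)"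

lemma sum_mult_le_box_bound:
  fixes g s l u :: "nat \<Rightarrow> real"
  assumes "in_box n l u s"
  shows "(\<Sum>j<n. g j * s j)
    \<le> (\<Sum>j\<in>{j. j < n \<and> g j > 0}. g j * u j) + (\<Sum>j\<in>{j. j < n \<and> g j < 0}. g j * l j)"
proof -
  let ?P = "{j. j < n \<and> g j > 0}" and ?N = "{j. j < n \<and> g j < 0}" and ?Z = "{j. j < n \<and> g j = 0}"
  have "(\<Sum>j<n. g j * s j) = (\<Sum>j\<in>?P \<union> (?N \<union> ?Z). g j * s j)"
    by (rule sum.cong) auto
  also have "\<dots> = (\<Sum>j\<in>?P. g j * s j) + (\<Sum>j\<in>?N \<union> ?Z. g j * s j)"
    by (rule sum.union_disjoint) auto
  also have "(\<Sum>j\<in>?N \<union> ?Z. g j * s j) = (\<Sum>j\<in>?N. g j * s j)"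
    by (subst sum.union_disjoint) auto
  finally have "(\<Sum>j<n. g j * s j) = (\<Sum>j\<in>?P. g j * s j) + (\<Sum>j\<in>?N. g j * s j)" .
  moreover have "(\<Sum>j\<in>?P. g j * s j) \<le> (\<Sum>j\<in>?P. g j * u j)"
    using assms by (intro sum_mono) (auto simp: in_box_def intro: mult_left_mono)
  moreover have "(\<Sum>j\<in>?N. g j * s j) \<le> (\<Sum>j\<in>?N. g j * l j)"
    using assms by (intro sum_mono) (auto simp: in_box_def intro: mult_left_mono_neg)
  ultimately show ?thesis by linarith
qed

lemma sum_gamma_mult_eq:
  "(\<Sum>j<n. gamma m A w j * s j) = (\<Sum>i<m. w ! i * (\<Sum>j<n. A i j * s j))"
  unfolding gamma_def
  by (simp add: sum_distrib_left sum_distrib_right sum.swap[of _ "{..<n}"] mult.assoc)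

lemma leafcheck_no_kernel_point_in_box:
  assumes "leafcheck m n A u l w"
    and "\<forall>i<m. (\<Sum>j<n. A i j * s j) = 0"
    and "in_box n l u s"
  shows False
proof -
  have "(\<Sum>j<n. gamma m A w j * s j) = 0"
    using assms(2) by (simp add: sum_gamma_mult_eq)
  with sum_mult_le_box_bound[OF assms(3), of "gamma m A w"] assms(1) show False
    unfolding leafcheck_def by linarith
qed

lemma update_bounds_cover:
  assumes "valid_split n C \<sigma>"
    and "\<forall>c\<in>C. relu_sat s c"
    and "in_box n l u s"
    and "update_bounds l u \<sigma> = ((lL, uL), (lR, uR))"
  shows "in_box n lL uL s \<or> in_box n lR uR s"
proof (cases \<sigma>)
  case (SingleVar i k)
  then show ?thesis
    using assms(3,4) by (cases "s i \<le> k") (auto simp: in_box_def split: if_splits)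
next
  case (Relu b f a)
  \<comment> \<open>Of the distinctness conditions only \<open>b \<noteq> a\<close> matters: otherwise the active branch would force \<open>s b = 0\<close>.\<close>
  with assms(1) have "(b, f, a) \<in> C" "b \<noteq> a"
    by (auto simp: valid_split_def)
  with assms(2) have relu: "s f = max (s b) 0" "s a = s f - s b"
    by (auto simp: relu_sat_def)
  show ?thesis
  proof (cases "s b \<le> 0")
    case True
    then have "in_box n (l(f := 0)) (u(b := 0, f := 0)) s"
      using assms(3) relu by (auto simp: in_box_def)
    then show ?thesis using Relu assms(4) by auto
  next
    case False
    then have "in_box n (l(b := 0, a := 0)) (u(a := 0)) s"
      using assms(3) relu \<open>b \<noteq> a\<close> by (auto simp: in_box_def)
    then show ?thesis using Relu assms(4) by auto
  qed
qed

lemma check_tree_no_solution_in_box: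
  assumes "check_tree m n A u l C T"
    and "\<forall>i<m. (\<Sum>j<n. A i j * s j) = 0"
    and "\<forall>c\<in>C. relu_sat s c"
    and "in_box n l u s"
  shows False
  using assms(1,4)
proof (induction T arbitrary: l u)
  case (Leaf w)
  then show ?case
    using leafcheck_no_kernel_point_in_box[OF _ assms(2)] by simp
next
  case (Node \<sigma> TL TR)
  obtain lL uL lR uR where upd: "update_bounds l u \<sigma> = ((lL, uL), (lR, uR))"
    by (metis prod.exhaust)
  with Node.prems have "valid_split n C \<sigma>" "check_tree m n A uL lL C TL" "check_tree m n A uR lR C TR"
    by auto
  then show ?case
    using update_bounds_cover[OF _ assms(3) Node.prems(2) upd] Node.IH by blast
qed

theorem mainTheorem8:
  fixes m n :: nat and A :: "nat \<Rightarrow> nat \<Rightarrow> real" and u l :: "nat \<Rightarrow> real"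
    and C :: "relu set" and T :: proof_tree
  assumes "m \<ge> 1" and "n \<ge> 1"
    and "finite C"
    and "\<forall>(b, f, a) \<in> C. b < n \<and> f < n \<and> a < n"
    and "check_tree m n A u l C T"
  shows "\<not> (\<exists>s :: nat \<Rightarrow> real. is_solution m n A u l C s)"
proof
  assume "\<exists>s. is_solution m n A u l C s"
  then obtain s where "is_solution m n A u l C s" ..
  then have "\<forall>i<m. (\<Sum>j<n. A i j * s j) = 0" "\<forall>c\<in>C. relu_sat s c" "in_box n l u s"
    unfolding is_solution_def in_box_def by auto
  then show False
    by (rule check_tree_no_solution_in_box[OF assms(5)])
qed

end
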